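(* Let $P\in\mathcal{N}_2$ via the pair of chain covers $\{\mathcal{C}_1,\mathcal{C}_2\}$, and let $\bm{c}\subseteq P$ be a convex subposet of $P$ which is a chain. Then there is a chain in $\mathcal{C}_1$ or a chain in $\mathcal{C}_2$ that contains all of $\bm{c}$.
   Context: All posets are finite. An edge of a poset is a covering relation $x \lessdot y$. A chain cover of a poset $P$ is a set of pairwise disjoint saturated chains whose union is $P$. A labeling of $P$ is a map $\lambda:P\to\mathbb{R}$. For a chain cover $\mathcal{C}$, $\mathcal{C}$-sorting a labeling means: for each chain $\bm{c}\in\mathcal{C}$, permute the labels $\{\lambda(v): v\in \bm{c}\}$ among the elements of $\bm{c}$ so that they are non-decreasing from the minimum of $\bm{c}$ to its maximum. A finite poset $P$ is in $\mathcal{N}_2$ via $\{\mathcal{C}_1,\mathcal{C}_2\}$ if $\{\mathcal{C}_1,\mathcal{C}_2\}$ is an unordered pair of chain covers of $P$ such that (1) for every labeling of $P$ and for $i=1$ and $i=2$, first $\mathcal{C}_i$-sorting and then $\mathcal{C}_{3-i}$-sorting leaves the labels non-decreasing along every chain of $\mathcal{C}_i$; and (2) every edge of $P$ is contained in some chain of $\mathcal{C}_1$ or of $\mathcal{C}_2$. A subset $S$ is convex if $x\le z\le y$ with $x,y\in S$ implies $z\in S$. *)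

theory Defs
  imports Main "HOL.Real"
begin

definition finite_poset :: "'a set \<Rightarrow> ('a \<Rightarrow> 'a \<Rightarrow> bool) \<Rightarrow> bool" where
  "finite_poset P le \<longleftrightarrow> finite P
     \<and> (\<forall>x\<in>P. le x x)
     \<and> (\<forall>x\<in>P. \<forall>y\<in>P. le x y \<and> le y x \<longrightarrow> x = y)
     \<and> (\<forall>x\<in>P. \<forall>y\<in>P. \<forall>z\<in>P. le x y \<and> le y z \<longrightarrow> le x z)"

definition covers :: "'a set \<Rightarrow> ('a \<Rightarrow> 'a \<Rightarrow> bool) \<Rightarrow> 'a \<Rightarrow> 'a \<Rightarrow> bool" where
  "covers P le x y \<longleftrightarrow> x \<in> P \<and> y \<in> P \<and> le x y \<and> x \<noteq> y
     \<and> \<not> (\<exists>z\<in>P. le x z \<and> le z y \<and> z \<noteq> x \<and> z \<noteq> y)"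

definition is_chain :: "'a set \<Rightarrow> ('a \<Rightarrow> 'a \<Rightarrow> bool) \<Rightarrow> 'a set \<Rightarrow> bool" where
  "is_chain P le c \<longleftrightarrow> c \<subseteq> P \<and> (\<forall>x\<in>c. \<forall>y\<in>c. le x y \<or> le y x)"

definition saturated_chain :: "'a set \<Rightarrow> ('a \<Rightarrow> 'a \<Rightarrow> bool) \<Rightarrow> 'a set \<Rightarrow> bool" where
  "saturated_chain P le c \<longleftrightarrow> is_chain P le c \<and> c \<noteq> {}
     \<and> (\<forall>x\<in>c. \<forall>y\<in>c. le x y \<and> x \<noteq> y
           \<and> \<not> (\<exists>z\<in>c. le x z \<and> le z y \<and> z \<noteq> x \<and> z \<noteq> y)
           \<longrightarrow> covers P le x y)"

definition chain_cover :: "'a set \<Rightarrow> ('a \<Rightarrow> 'a \<Rightarrow> bool) \<Rightarrow> 'a set set \<Rightarrow> bool" where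
  "chain_cover P le C \<longleftrightarrow> (\<forall>c\<in>C. saturated_chain P le c) \<and> pairwise disjnt C \<and> \<Union>C = P"

text \<open>mu is the result of C-sorting the labeling lam: on each chain of C the labels of lam
  are permuted among the elements of the chain so as to become non-decreasing.\<close>
definition C_sort :: "('a \<Rightarrow> 'a \<Rightarrow> bool) \<Rightarrow> 'a set set \<Rightarrow> ('a \<Rightarrow> real) \<Rightarrow> ('a \<Rightarrow> real) \<Rightarrow> bool" where
  "C_sort le C lam mu \<longleftrightarrow> (\<forall>c\<in>C.
       (\<exists>\<sigma>. bij_betw \<sigma> c c \<and> (\<forall>x\<in>c. mu x = lam (\<sigma> x)))
     \<and> (\<forall>x\<in>c. \<forall>y\<in>c. le x y \<longrightarrow> mu x \<le> mu y))"

definition sorted_along :: "('a \<Rightarrow> 'a \<Rightarrow> bool) \<Rightarrow> 'a set set \<Rightarrow> ('a \<Rightarrow> real) \<Rightarrow> bool" where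
  "sorted_along le C mu \<longleftrightarrow> (\<forall>c\<in>C. \<forall>x\<in>c. \<forall>y\<in>c. le x y \<longrightarrow> mu x \<le> mu y)"

definition in_N2 :: "'a set \<Rightarrow> ('a \<Rightarrow> 'a \<Rightarrow> bool) \<Rightarrow> 'a set set \<Rightarrow> 'a set set \<Rightarrow> bool" where
  "in_N2 P le C1 C2 \<longleftrightarrow> finite_poset P le \<and> chain_cover P le C1 \<and> chain_cover P le C2
     \<and> (\<forall>lam mu nu. C_sort le C1 lam mu \<and> C_sort le C2 mu nu \<longrightarrow> sorted_along le C1 nu)
     \<and> (\<forall>lam mu nu. C_sort le C2 lam mu \<and> C_sort le C1 mu nu \<longrightarrow> sorted_along le C2 nu)
     \<and> (\<forall>x y. covers P le x y \<longrightarrow> (\<exists>c\<in>C1 \<union> C2. x \<in> c \<and> y \<in> c))"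

definition convex :: "'a set \<Rightarrow> ('a \<Rightarrow> 'a \<Rightarrow> bool) \<Rightarrow> 'a set \<Rightarrow> bool" where
  "convex P le S \<longleftrightarrow> S \<subseteq> P \<and> (\<forall>x\<in>S. \<forall>y\<in>S. \<forall>z\<in>P. le x z \<and> le z y \<longrightarrow> z \<in> S)"

end

theory Submission
  imports Defs "HOL-Combinatorics.Transposition"
begin

(* Induct on the size of the convex chain c.  Removing its top element m leaves a convex chain,
   contained in some chain d of C1 or C2; its new top y is covered by m, so y and m lie in a
   common chain e.  If neither d nor e contains c, then d and e belong to different covers and
   there is a greatest x in c outside e.  Label everything below m by 0, everything else by 1,
   and x by 1/2.  This labeling is already sorted along the chains of e's cover; sorting along
   the chains of d's cover merely swaps the labels of x and y, leaving the label 1/2 of y above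
   the label 0 of m inside e, which contradicts the N_2 condition. *)

lemma finite_poset_refl: "finite_poset P le \<Longrightarrow> x \<in> P \<Longrightarrow> le x x"
  unfolding finite_poset_def by blast

lemma finite_poset_antisym:
  "finite_poset P le \<Longrightarrow> x \<in> P \<Longrightarrow> y \<in> P \<Longrightarrow> le x y \<Longrightarrow> le y x \<Longrightarrow> x = y"
  unfolding finite_poset_def by blast

lemma finite_poset_trans:
  "finite_poset P le \<Longrightarrow> x \<in> P \<Longrightarrow> y \<in> P \<Longrightarrow> z \<in> P \<Longrightarrow> le x y \<Longrightarrow> le y z \<Longrightarrow> le x z"
  unfolding finite_poset_def by blast

lemma chain_cover_subset: "chain_cover P le C \<Longrightarrow> D \<in> C \<Longrightarrow> D \<subseteq> P"
  unfolding chain_cover_def by blast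

lemma chain_cover_unique:
  "chain_cover P le C \<Longrightarrow> D \<in> C \<Longrightarrow> D' \<in> C \<Longrightarrow> x \<in> D \<Longrightarrow> x \<in> D' \<Longrightarrow> D = D'"
  unfolding chain_cover_def pairwise_def disjnt_def by blast

lemma chain_cover_obtain:
  assumes "chain_cover P le C" and "x \<in> P"
  obtains D where "D \<in> C" and "x \<in> D"
  using assms unfolding chain_cover_def by blast

lemma chain_has_greatest:
  assumes "finite_poset P le" and "finite S" and "S \<noteq> {}" and "is_chain P le S"
  shows "\<exists>m\<in>S. \<forall>s\<in>S. le s m"
  using assms(2-4)
proof (induction S rule: finite_ne_induct)
  case (singleton a)
  then show ?case using assms(1) finite_poset_refl unfolding is_chain_def by fastforce
next
  case (insert a F)
  then have "is_chain P le F" and aP: "a \<in> P" and FP: "F \<subseteq> P"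
    unfolding is_chain_def by auto
  with insert.IH obtain m where m: "m \<in> F" "\<forall>s\<in>F. le s m" by blast
  show ?case
  proof (cases "le m a")
    case True
    then have "\<forall>s\<in>insert a F. le s a"
      using m aP FP finite_poset_refl[OF assms(1)] finite_poset_trans[OF assms(1)] by blast
    then show ?thesis by blast
  next
    case False
    then have "le a m" using insert.prems m(1) unfolding is_chain_def by blast
    then show ?thesis using m by blast
  qed
qed

lemma convex_Diff_greatest:
  assumes "finite_poset P le" and "convex P le c" and "m \<in> c" and "\<forall>s\<in>c. le s m"
  shows "convex P le (c - {m})"
  unfolding convex_def
proof (intro conjI ballI impI)
  show "c - {m} \<subseteq> P" using assms(2) unfolding convex_def by blast
  fix a b z assume a: "a \<in> c - {m}" and b: "b \<in> c - {m}" and "z \<in> P" and "le a z \<and> le z b"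
  then have "z \<in> c" using assms(2) unfolding convex_def by blast
  moreover have "z \<noteq> m"
  proof
    assume "z = m"
    then have "b = m"
      using b \<open>le a z \<and> le z b\<close> assms(3,4) \<open>z \<in> P\<close> assms(2)
        finite_poset_antisym[OF assms(1)] unfolding convex_def by blast
    then show False using b by blast
  qed
  ultimately show "z \<in> c - {m}" by blast
qed

lemma covers_greatest:
  assumes "finite_poset P le" and "convex P le c"
    and "m \<in> c" and "\<forall>s\<in>c. le s m"
    and "y \<in> c" and "y \<noteq> m" and "\<forall>s\<in>c - {m}. le s y"
  shows "covers P le y m"
  unfolding covers_def
proof (intro conjI)
  have cP: "c \<subseteq> P" using assms(2) unfolding convex_def by blast
  then show "y \<in> P" "m \<in> P" using assms(3,5) by auto
  show "le y m" "y \<noteq> m" using assms(4-6) by auto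
  show "\<not> (\<exists>z\<in>P. le y z \<and> le z m \<and> z \<noteq> y \<and> z \<noteq> m)"
  proof
    assume "\<exists>z\<in>P. le y z \<and> le z m \<and> z \<noteq> y \<and> z \<noteq> m"
    then obtain z where z: "z \<in> P" "le y z" "le z m" "z \<noteq> y" "z \<noteq> m" by blast
    then have "z \<in> c" using assms(2,3,5) unfolding convex_def by blast
    then have "le z y" using assms(7) z(5) by blast
    then show False using finite_poset_antisym[OF assms(1)] z cP assms(5) by blast
  qed
qed

lemma C_sort_comp:
  assumes "\<forall>D\<in>C. bij_betw \<sigma> D D" and "sorted_along le C (mu \<circ> \<sigma>)"
  shows "C_sort le C mu (mu \<circ> \<sigma>)"
  using assms unfolding C_sort_def sorted_along_def by auto

lemma sorted_along_threshold_bump: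
  assumes "finite_poset P le" and "\<forall>D\<in>C. D \<subseteq> P" and "m \<in> P" and "le z m"
    and isolated: "\<forall>D\<in>C. z \<in> D \<longrightarrow> (\<forall>v\<in>D. le z v \<and> le v m \<longrightarrow> v = z)"
  shows "sorted_along le C ((\<lambda>v. if le v m then 0 else 1 :: real)(z := 1/2))"
  unfolding sorted_along_def
proof (intro ballI impI)
  fix D u v assume D: "D \<in> C" and u: "u \<in> D" and v: "v \<in> D" and "le u v"
  have uP: "u \<in> P" and vP: "v \<in> P" using D u v assms(2) by auto
  have below: "le u m" if "le v m"
    using finite_poset_trans[OF assms(1) uP vP assms(3)] \<open>le u v\<close> that .
  have "\<not> le v m" if "u = z" "v \<noteq> z"
    using isolated D u v \<open>le u v\<close> that by blast
  then show "((\<lambda>v. if le v m then 0 else 1 :: real)(z := 1/2)) u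
      \<le> ((\<lambda>v. if le v m then 0 else 1 :: real)(z := 1/2)) v"
    using below assms(4) \<open>le u v\<close> by (cases "u = z"; cases "v = z") auto
qed

lemma sorting_condition_excludes_crossing:
  assumes fp: "finite_poset P le"
    and Ci: "chain_cover P le Ci" and Cj: "chain_cover P le Cj"
    and sort: "\<forall>lam mu nu. C_sort le Cj lam mu \<and> C_sort le Ci mu nu \<longrightarrow> sorted_along le Cj nu"
    and d: "d \<in> Ci" "x \<in> d" "y \<in> d"
    and e: "e \<in> Cj" "y \<in> e" "m \<in> e" "x \<notin> e"
    and order: "le x m" "le y m" "y \<noteq> m"
    and below_y: "\<forall>w\<in>d. le y w \<and> le w m \<longrightarrow> w = y"
    and above_x: "\<forall>v\<in>P. le x v \<and> le v m \<longrightarrow> v = x \<or> v \<in> e"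
  shows False
proof -
  define h where "h = (\<lambda>v. if le v m then 0 else 1 :: real)"
  define mu where "mu = h(x := 1/2)"
  have mP: "m \<in> P" using Cj e chain_cover_subset by blast
  have "sorted_along le Cj mu"
    unfolding mu_def h_def
  proof (rule sorted_along_threshold_bump[OF fp _ mP order(1)])
    show "\<forall>D\<in>Cj. D \<subseteq> P" using Cj chain_cover_subset by blast
    show "\<forall>D\<in>Cj. x \<in> D \<longrightarrow> (\<forall>v\<in>D. le x v \<and> le v m \<longrightarrow> v = x)"
      using above_x chain_cover_unique[OF Cj _ e(1)] chain_cover_subset[OF Cj] e(4) by blast
  qed
  then have mu_fixed: "C_sort le Cj mu mu"
    using C_sort_comp[of Cj id le mu] by simp
  have swapped: "mu \<circ> transpose x y = h(y := 1/2)"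
    using e(2,4) order(1,2) by (auto simp: mu_def h_def transpose_def)
  have "sorted_along le Ci (h(y := 1/2))"
    unfolding h_def
  proof (rule sorted_along_threshold_bump[OF fp _ mP order(2)])
    show "\<forall>D\<in>Ci. D \<subseteq> P" using Ci chain_cover_subset by blast
    show "\<forall>D\<in>Ci. y \<in> D \<longrightarrow> (\<forall>v\<in>D. le y v \<and> le v m \<longrightarrow> v = y)"
      using below_y chain_cover_unique[OF Ci _ d(1) _ d(3)] by blast
  qed
  moreover have "\<forall>D\<in>Ci. bij_betw (transpose x y) D D"
    using chain_cover_unique[OF Ci _ d(1)] d(2,3) by (metis bij_betw_transpose_iff)
  ultimately have "C_sort le Ci mu (h(y := 1/2))"
    using C_sort_comp swapped by metis
  with mu_fixed sort have "sorted_along le Cj (h(y := 1/2))" by blast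
  then have "(h(y := 1/2)) y \<le> (h(y := 1/2)) m"
    using e(1-3) order(2) unfolding sorted_along_def by blast
  then show False
    using order(3) finite_poset_refl[OF fp mP] by (simp add: h_def)
qed

lemma convex_chain_in_cover_insert_greatest:
  assumes N: "in_N2 P le C1 C2"
    and conv: "convex P le c" and chain: "is_chain P le c"
    and m: "m \<in> c" "\<forall>s\<in>c. le s m"
    and d: "d \<in> C1 \<union> C2" "c - {m} \<subseteq> d" and ne: "c - {m} \<noteq> {}"
  shows "\<exists>d\<in>C1 \<union> C2. c \<subseteq> d"
proof (rule ccontr)
  assume none: "\<not> (\<exists>d\<in>C1 \<union> C2. c \<subseteq> d)"
  have fp: "finite_poset P le" and cc1: "chain_cover P le C1" and cc2: "chain_cover P le C2"
    and sort12: "\<forall>lam mu nu. C_sort le C1 lam mu \<and> C_sort le C2 mu nu \<longrightarrow> sorted_along le C1 nu"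
    and sort21: "\<forall>lam mu nu. C_sort le C2 lam mu \<and> C_sort le C1 mu nu \<longrightarrow> sorted_along le C2 nu"
    and edges: "\<forall>x y. covers P le x y \<longrightarrow> (\<exists>c\<in>C1 \<union> C2. x \<in> c \<and> y \<in> c)"
    using N unfolding in_N2_def by simp_all
  have cP: "c \<subseteq> P" using chain unfolding is_chain_def by blast
  have sub_chain: "is_chain P le (c - e)" for e using chain unfolding is_chain_def by blast
  have fin: "finite (c - e)" for e
    using cP fp finite_subset unfolding finite_poset_def by blast
  have between: "z \<in> c" if "a \<in> c" "z \<in> P" "le a z" "le z m" for a z
    using conv that m(1) unfolding convex_def by blast
  obtain y where y: "y \<in> c - {m}" "\<forall>s\<in>c - {m}. le s y"
    using chain_has_greatest[OF fp fin ne sub_chain] by blast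
  then have "covers P le y m"
    using covers_greatest[OF fp conv m] by blast
  then obtain e where e: "e \<in> C1 \<union> C2" "y \<in> e" "m \<in> e" using edges by blast
  have md: "m \<notin> d" using none d by blast
  have "c - e \<noteq> {}" using none e(1) by blast
  then obtain x where x: "x \<in> c - e" "\<forall>s\<in>c - e. le s x"
    using chain_has_greatest[OF fp fin _ sub_chain] by blast
  have dP: "d \<subseteq> P" using d(1) chain_cover_subset[OF cc1] chain_cover_subset[OF cc2] by blast
  have below_y: "\<forall>w\<in>d. le y w \<and> le w m \<longrightarrow> w = y"
  proof (intro ballI impI)
    fix w assume "w \<in> d" and w: "le y w \<and> le w m"
    then have "w \<in> c - {m}" using between y(1) dP md by blast
    then have "le w y" using y(2) by blast
    then show "w = y" using finite_poset_antisym[OF fp] w \<open>w \<in> c - {m}\<close> y(1) cP by blast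
  qed
  have above_x: "\<forall>v\<in>P. le x v \<and> le v m \<longrightarrow> v = x \<or> v \<in> e"
  proof (intro ballI impI)
    fix v assume "v \<in> P" and v: "le x v \<and> le v m"
    then have "v \<in> c" using between x(1) by blast
    then have "v \<notin> e \<Longrightarrow> le v x" using x(2) by blast
    then show "v = x \<or> v \<in> e" using finite_poset_antisym[OF fp] v \<open>v \<in> P\<close> x(1) cP by blast
  qed
  have "x \<in> d" "y \<in> d" using x y e(3) d(2) by auto
  have order: "le x m" "le y m" "y \<noteq> m" using x y m by auto
  have "d \<in> C1 \<and> e \<in> C2 \<or> d \<in> C2 \<and> e \<in> C1"
    using chain_cover_unique[OF cc1 _ _ \<open>y \<in> d\<close> e(2)]
      chain_cover_unique[OF cc2 _ _ \<open>y \<in> d\<close> e(2)] d(1) e(1,3) md by blast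
  then show False
  proof
    assume "d \<in> C1 \<and> e \<in> C2"
    with sort21 show False
      using sorting_condition_excludes_crossing[OF fp cc1 cc2 _ _ \<open>x \<in> d\<close> \<open>y \<in> d\<close> _ e(2,3)
          _ order below_y above_x] x(1) by blast
  next
    assume "d \<in> C2 \<and> e \<in> C1"
    with sort12 show False
      using sorting_condition_excludes_crossing[OF fp cc2 cc1 _ _ \<open>x \<in> d\<close> \<open>y \<in> d\<close> _ e(2,3)
          _ order below_y above_x] x(1) by blast
  qed
qed

theorem lemma2p2:
  fixes P :: "'a set" and le :: "'a \<Rightarrow> 'a \<Rightarrow> bool"
    and C1 C2 :: "'a set set" and c :: "'a set"
  assumes "in_N2 P le C1 C2"
    and "convex P le c"
    and "is_chain P le c"
    and "c \<noteq> {}"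
  shows "\<exists>d \<in> C1 \<union> C2. c \<subseteq> d"
  using assms(2-4)
proof (induction "card c" arbitrary: c rule: less_induct)
  case less
  have fp: "finite_poset P le" and cc1: "chain_cover P le C1"
    using assms(1) unfolding in_N2_def by blast+
  have cP: "c \<subseteq> P" using less.prems(2) unfolding is_chain_def by blast
  then have fin: "finite c" using fp finite_subset unfolding finite_poset_def by blast
  obtain m where m: "m \<in> c" "\<forall>s\<in>c. le s m"
    using chain_has_greatest[OF fp fin less.prems(3,2)] by blast
  show ?case
  proof (cases "c - {m} = {}")
    case True
    obtain D where "D \<in> C1" "m \<in> D" using chain_cover_obtain[OF cc1] m(1) cP by blast
    then show ?thesis using True by blast
  next
    case False
    have "card (c - {m}) < card c" using card_Diff1_less[OF fin m(1)] .
    moreover have "convex P le (c - {m})" using convex_Diff_greatest[OF fp less.prems(1) m] .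
    moreover have "is_chain P le (c - {m})" using less.prems(2) unfolding is_chain_def by blast
    ultimately obtain d where "d \<in> C1 \<union> C2" "c - {m} \<subseteq> d" using less.hyps False by blast
    then show ?thesis
      using convex_chain_in_cover_insert_greatest[OF assms(1) less.prems(1,2) m] False by blast
  qed
qed

end
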